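(* Let $P$ be a positive event pattern and $I$ an event stream. Run the following algorithm: set $V := \emptyset$ and $final\_count := 0$; process the events of $I$ one at a time in nondecreasing order of time; for an event $e$ of type $E$, let $Pr := \{p \in V : p.type \in predTypes(E),\ p.time < e.time\}$; if $E = start(P)$ or $Pr \neq \emptyset$, then add $e$ to $V$, set $e.count := [E = start(P)] + \sum_{p \in Pr} p.count$ (where $[\cdot]$ is $1$ if true and $0$ otherwise), and, if $E = end(P)$, increase $final\_count$ by $e.count$; finally return $final\_count$. Then for every event $e$ added to $V$, $e.count$ equals the number of sequences $(e_1,\dots,e_m)$, $m\ge 1$, of events of $I$ with $e_m = e$, $e_1.type = start(P)$, $e_1.time < e_2.time < \dots < e_m.time$ and $e_l.type \in predTypes(e_{l+1}.type)$ for all $1 \le l < m$ (i.e., the number of sub-trends from a START event to $e$ in the GRETA graph), and the returned value $final\_count$ equals the number of event trends matched by $P$ in $I$.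
   Context: Events: each event $e$ has an event type $e.type$ and an occurrence time $e.time \in \mathbb{Q}_{\ge 0}$. An event stream $I$ is a finite collection of distinct events arriving in nondecreasing order of time. Positive patterns: an event type $E$ is a pattern; if $P_i,P_j$ are patterns then $P_i+$ and $\mathsf{SEQ}(P_i,P_j)$ are patterns; each event type occurs at most once in a pattern. Matches over $I$: $matches(E)=\{(e): e\in I, e.type=E\}$; $(e_1,\dots,e_k)\in matches(\mathsf{SEQ}(P_i,P_j))$ iff for some $1\le m\le k$, $(e_1,\dots,e_m)\in matches(P_i)$, $(e_{m+1},\dots,e_k)\in matches(P_j)$ and $e_1.time<\dots<e_k.time$; $matches(P_i+)$ consists of concatenations $s_1\cdots s_k$ ($k\ge1$) with each $s_l\in matches(P_i)$ and the last event of $s_l$ strictly earlier than the first event of $s_{l+1}$. Event trends matched by $P$ in $I$ are the elements of $matches(P)$. Define $start(E)=end(E)=E$, $start(P_i+)=start(P_i)$, $end(P_i+)=end(P_i)$, $start(\mathsf{SEQ}(P_i,P_j))=start(P_i)$, $end(\mathsf{SEQ}(P_i,P_j))=end(P_j)$. GRETA template of $P$: its states are the event types in $P$; for every sub-pattern $\mathsf{SEQ}(P_i,P_j)$ of $P$ there is a transition from $end(P_i)$ to $start(P_j)$, and for every sub-pattern $P_i+$ of $P$ there is a transition from $end(P_i)$ to $start(P_i)$. For an event type $E$, $predTypes(E)$ is the set of event types $E'$ such that the template has a transition from $E'$ to $E$. *)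

theory Defs
  imports Main "HOL.Rat"
begin

text \<open>Events are elements of an abstract type 'e, with a type function
  ety :: 'e => 't and an occurrence-time function tm :: 'e => rat.
  An event stream is a list of distinct events, sorted by time.\<close>

datatype 't pat = Atom 't | Plus "'t pat" | Seq "'t pat" "'t pat"

fun pat_types :: "'t pat \<Rightarrow> 't list" where
  "pat_types (Atom E) = [E]"
| "pat_types (Plus P) = pat_types P"
| "pat_types (Seq P Q) = pat_types P @ pat_types Q"

definition wf_pat :: "'t pat \<Rightarrow> bool" where
  "wf_pat P \<longleftrightarrow> distinct (pat_types P)"

fun pstart :: "'t pat \<Rightarrow> 't" where
  "pstart (Atom E) = E"
| "pstart (Plus P) = pstart P"
| "pstart (Seq P Q) = pstart P"

fun pend :: "'t pat \<Rightarrow> 't" where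
  "pend (Atom E) = E"
| "pend (Plus P) = pend P"
| "pend (Seq P Q) = pend Q"

fun trans_of :: "'t pat \<Rightarrow> ('t \<times> 't) set" where
  "trans_of (Atom E) = {}"
| "trans_of (Plus P) = insert (pend P, pstart P) (trans_of P)"
| "trans_of (Seq P Q) = insert (pend P, pstart Q) (trans_of P \<union> trans_of Q)"

definition predTypes :: "'t pat \<Rightarrow> 't \<Rightarrow> 't set" where
  "predTypes P E = {E'. (E', E) \<in> trans_of P}"

inductive_set plus_cl :: "('e \<Rightarrow> rat) \<Rightarrow> 'e list set \<Rightarrow> 'e list set"
  for tm :: "'e \<Rightarrow> rat" and M :: "'e list set" where
  base: "s \<in> M \<Longrightarrow> s \<in> plus_cl tm M"
| step: "s \<in> M \<Longrightarrow> t \<in> plus_cl tm M \<Longrightarrow> tm (last s) < tm (hd t) \<Longrightarrow> s @ t \<in> plus_cl tm M"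

fun matches :: "('e \<Rightarrow> 't) \<Rightarrow> ('e \<Rightarrow> rat) \<Rightarrow> 'e list \<Rightarrow> 't pat \<Rightarrow> 'e list set" where
  "matches ety tm I (Atom E) = {[e] | e. e \<in> set I \<and> ety e = E}"
| "matches ety tm I (Seq P Q) =
     {xs @ ys | xs ys. xs \<in> matches ety tm I P \<and> ys \<in> matches ety tm I Q
                      \<and> sorted_wrt (\<lambda>a b. tm a < tm b) (xs @ ys)}"
| "matches ety tm I (Plus P) = plus_cl tm (matches ety tm I P)"

definition event_stream :: "('e \<Rightarrow> rat) \<Rightarrow> 'e list \<Rightarrow> bool" where
  "event_stream tm I \<longleftrightarrow> distinct I \<and> sorted (map tm I) \<and> (\<forall>e\<in>set I. 0 \<le> tm e)"

definition alg_step :: "('e \<Rightarrow> 't) \<Rightarrow> ('e \<Rightarrow> rat) \<Rightarrow> 't pat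
    \<Rightarrow> 'e set \<times> ('e \<Rightarrow> nat) \<times> nat \<Rightarrow> 'e \<Rightarrow> 'e set \<times> ('e \<Rightarrow> nat) \<times> nat" where
  "alg_step ety tm P st e =
    (case st of (V, cnt, fc) \<Rightarrow>
      (let E = ety e;
           Pr = {p \<in> V. ety p \<in> predTypes P E \<and> tm p < tm e}
       in if E = pstart P \<or> Pr \<noteq> {} then
            (let c = (if E = pstart P then 1 else 0) + (\<Sum>p\<in>Pr. cnt p)
             in (insert e V, cnt(e := c), if E = pend P then fc + c else fc))
          else (V, cnt, fc)))"

definition run_alg :: "('e \<Rightarrow> 't) \<Rightarrow> ('e \<Rightarrow> rat) \<Rightarrow> 't pat \<Rightarrow> 'e list
    \<Rightarrow> 'e set \<times> ('e \<Rightarrow> nat) \<times> nat" where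
  "run_alg ety tm P I = foldl (alg_step ety tm P) ({}, (\<lambda>_. 0), 0) I"

definition subtrends :: "('e \<Rightarrow> 't) \<Rightarrow> ('e \<Rightarrow> rat) \<Rightarrow> 't pat \<Rightarrow> 'e list \<Rightarrow> 'e \<Rightarrow> 'e list set" where
  "subtrends ety tm P I e = {s. s \<noteq> [] \<and> set s \<subseteq> set I \<and> last s = e \<and> ety (hd s) = pstart P
      \<and> sorted_wrt (\<lambda>a b. tm a < tm b) s
      \<and> (\<forall>l. l + 1 < length s \<longrightarrow> ety (s ! l) \<in> predTypes P (ety (s ! (l + 1))))}"

end

(*
  A match of a well-formed pattern P is the same thing as a time-increasing sequence of events
  of I whose types walk along the GRETA template from start(P) to end(P): for P+ the only new
  edge end(P) -> start(P) marks where consecutive iterations meet, and for SEQ(P, Q) the type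
  sets of P and Q are disjoint, so a walk leaves the types of P exactly once, through the edge
  end(P) -> start(Q). Such a walk is a sub-trend ending at an END event. The sub-trends ending
  at e are [e], if e is a START event, together with the extensions by e of the sub-trends
  ending at the predecessors of e; this is the recurrence the algorithm evaluates. Processing
  the stream in time order guarantees that all predecessors of e have been processed before e,
  and the events the algorithm discards are exactly those without sub-trends, which contribute
  nothing to the recurrence.
*)
theory Submission
  imports Defs
begin

lemma sorted_wrt_less_hd_le:
  fixes f :: "'a \<Rightarrow> 'b::order"
  shows "sorted_wrt (\<lambda>a b. f a < f b) s \<Longrightarrow> x \<in> set s \<Longrightarrow> f (hd s) \<le> f x"
  by (induction s) (auto intro: less_imp_le)

lemma sorted_wrt_less_le_last:
  fixes f :: "'a \<Rightarrow> 'b::order"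
  shows "sorted_wrt (\<lambda>a b. f a < f b) s \<Longrightarrow> x \<in> set s \<Longrightarrow> f x \<le> f (last s)"
  by (induction s rule: rev_induct) (auto simp: sorted_wrt_append intro: less_imp_le)

lemma sorted_wrt_less_append:
  fixes f :: "'a \<Rightarrow> 'b::order"
  assumes "sorted_wrt (\<lambda>a b. f a < f b) xs" "sorted_wrt (\<lambda>a b. f a < f b) ys"
    and "xs \<noteq> [] \<Longrightarrow> ys \<noteq> [] \<Longrightarrow> f (last xs) < f (hd ys)"
  shows "sorted_wrt (\<lambda>a b. f a < f b) (xs @ ys)"
proof -
  have "f x < f y" if "x \<in> set xs" "y \<in> set ys" for x y
  proof -
    have "xs \<noteq> []" "ys \<noteq> []" using that by auto
    then show ?thesis
      using sorted_wrt_less_le_last[OF assms(1) that(1)] sorted_wrt_less_hd_le[OF assms(2) that(2)]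
        assms(3) by (meson order.strict_trans1 order.strict_trans2)
  qed
  then show ?thesis using assms(1,2) by (simp add: sorted_wrt_append)
qed

lemma sorted_wrt_less_imp_distinct:
  fixes f :: "'a \<Rightarrow> 'b::order"
  shows "sorted_wrt (\<lambda>a b. f a < f b) s \<Longrightarrow> distinct s"
  by (induction s) auto

lemma successively_closed_set:
  assumes "successively R s" "hd s \<in> S" "\<And>a b. R a b \<Longrightarrow> a \<in> S \<Longrightarrow> b \<in> S"
  shows "set s \<subseteq> S"
  using assms by (induction s rule: induct_list012) auto

lemma successively_disj_split:
  assumes "successively (\<lambda>x y. R x y \<or> Q x y) s" "\<not> successively R s"
  obtains xs ys where "s = xs @ ys" "xs \<noteq> []" "ys \<noteq> []" "successively R xs"
    "Q (last xs) (hd ys)" "successively (\<lambda>x y. R x y \<or> Q x y) ys"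
proof -
  have "\<exists>xs ys. s = xs @ ys \<and> xs \<noteq> [] \<and> ys \<noteq> [] \<and> successively R xs \<and> Q (last xs) (hd ys)
      \<and> successively (\<lambda>x y. R x y \<or> Q x y) ys"
    using assms
  proof (induction s rule: induct_list012)
    case (3 x y zs)
    show ?case
    proof (cases "R x y")
      case True
      with "3.prems" obtain xs ys where split: "y # zs = xs @ ys" "xs \<noteq> []" "ys \<noteq> []"
        "successively R xs" "Q (last xs) (hd ys)" "successively (\<lambda>x y. R x y \<or> Q x y) ys"
        using "3.IH"(2) by auto
      then show ?thesis using True
        by (intro exI[of _ "x # xs"] exI[of _ ys]) (cases xs; auto)
    next
      case False
      then show ?thesis using "3.prems" by (intro exI[of _ "[x]"] exI[of _ "y # zs"]) auto
    qed
  qed auto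
  then show ?thesis using that by blast
qed

lemma pstart_in_pat_types: "pstart P \<in> set (pat_types P)"
  by (induction P) auto

lemma pend_in_pat_types: "pend P \<in> set (pat_types P)"
  by (induction P) auto

lemma trans_of_subset_pat_types: "trans_of P \<subseteq> set (pat_types P) \<times> set (pat_types P)"
  by (induction P) (auto simp: pstart_in_pat_types pend_in_pat_types)

lemma trans_of_source_in_pat_types: "(x, y) \<in> trans_of P \<Longrightarrow> x \<in> set (pat_types P)"
  using trans_of_subset_pat_types by blast

lemma trans_of_target_in_pat_types: "(x, y) \<in> trans_of P \<Longrightarrow> y \<in> set (pat_types P)"
  using trans_of_subset_pat_types by blast

lemma successively_trans_of_in_pat_types:
  assumes "successively (\<lambda>a b. (ety a, ety b) \<in> trans_of P) s" "ety (hd s) \<in> set (pat_types P)"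
  shows "\<forall>a\<in>set s. ety a \<in> set (pat_types P)"
proof -
  have "set s \<subseteq> {a. ety a \<in> set (pat_types P)}"
    using assms(1)
  proof (rule successively_closed_set)
    fix a b assume "(ety a, ety b) \<in> trans_of P"
    then show "b \<in> {a. ety a \<in> set (pat_types P)}" by (simp add: trans_of_target_in_pat_types)
  qed (use assms(2) in simp)
  then show ?thesis by blast
qed

definition template_trends :: "('e \<Rightarrow> 't) \<Rightarrow> ('e \<Rightarrow> rat) \<Rightarrow> 'e list \<Rightarrow> 't pat \<Rightarrow> 'e list set" where
  "template_trends ety tm I P = {s. s \<noteq> [] \<and> set s \<subseteq> set I \<and> sorted_wrt (\<lambda>a b. tm a < tm b) s
     \<and> ety (hd s) = pstart P \<and> ety (last s) = pend P
     \<and> successively (\<lambda>a b. (ety a, ety b) \<in> trans_of P) s}"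

lemma template_trends_Atom: "template_trends ety tm I (Atom E) = {[e] | e. e \<in> set I \<and> ety e = E}"
proof (intro set_eqI iffI)
  fix s assume "s \<in> template_trends ety tm I (Atom E)"
  then show "s \<in> {[e] | e. e \<in> set I \<and> ety e = E}"
    unfolding template_trends_def by (cases s) (auto simp: successively_Cons)
qed (auto simp: template_trends_def)

lemma plus_cl_subset_template_trends_Plus:
  "plus_cl tm (template_trends ety tm I P) \<subseteq> template_trends ety tm I (Plus P)"
proof
  fix s assume "s \<in> plus_cl tm (template_trends ety tm I P)"
  then show "s \<in> template_trends ety tm I (Plus P)"
  proof (induction s rule: plus_cl.induct)
    case (base s)
    then show ?case unfolding template_trends_def by (auto elim: successively_mono)
  next
    case (step s t)
    then have "sorted_wrt (\<lambda>a b. tm a < tm b) (s @ t)"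
      by (intro sorted_wrt_less_append) (auto simp: template_trends_def)
    moreover have "successively (\<lambda>a b. (ety a, ety b) \<in> trans_of (Plus P)) (s @ t)"
      using step by (auto simp: template_trends_def successively_append_iff elim: successively_mono)
    ultimately show ?case using step by (auto simp: template_trends_def)
  qed
qed

text \<open>A template trend of \<open>Plus P\<close> is cut at its first use of the back edge \<open>end P \<rightarrow> start P\<close>.\<close>
lemma template_trends_Plus_subset_plus_cl:
  "template_trends ety tm I (Plus P) \<subseteq> plus_cl tm (template_trends ety tm I P)"
proof
  fix s assume "s \<in> template_trends ety tm I (Plus P)"
  then show "s \<in> plus_cl tm (template_trends ety tm I P)"
  proof (induction "length s" arbitrary: s rule: less_induct)
    case less
    let ?R = "\<lambda>a b. (ety a, ety b) \<in> trans_of P"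
    let ?Q = "\<lambda>a b. ety a = pend P \<and> ety b = pstart P"
    show ?case
    proof (cases "successively ?R s")
      case True
      then show ?thesis using less.prems by (intro plus_cl.base) (auto simp: template_trends_def)
    next
      case False
      have "successively (\<lambda>a b. ?R a b \<or> ?Q a b) s"
        using less.prems by (auto simp: template_trends_def elim: successively_mono)
      then obtain xs ys where split: "s = xs @ ys" "xs \<noteq> []" "ys \<noteq> []" "successively ?R xs"
        "?Q (last xs) (hd ys)" "successively (\<lambda>a b. ?R a b \<or> ?Q a b) ys"
        using False by (rule successively_disj_split)
      have sorted: "sorted_wrt (\<lambda>a b. tm a < tm b) xs" "sorted_wrt (\<lambda>a b. tm a < tm b) ys"
        "tm (last xs) < tm (hd ys)"
        using less.prems split(1-3) by (auto simp: template_trends_def sorted_wrt_append)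
      have "xs \<in> template_trends ety tm I P"
        using less.prems split sorted by (auto simp: template_trends_def)
      moreover have "ys \<in> template_trends ety tm I (Plus P)"
        using less.prems split sorted by (auto simp: template_trends_def elim: successively_mono)
      then have "ys \<in> plus_cl tm (template_trends ety tm I P)"
        using less.hyps split(1,2) by simp
      ultimately show ?thesis using plus_cl.step sorted(3) split(1) by blast
    qed
  qed
qed

lemma template_trends_Plus: "template_trends ety tm I (Plus P) = plus_cl tm (template_trends ety tm I P)"
  by (rule equalityI[OF template_trends_Plus_subset_plus_cl plus_cl_subset_template_trends_Plus])

text \<open>The template of \<open>Seq P Q\<close> has no edge from the types of \<open>Q\<close> back to those of \<open>P\<close>.\<close>
lemma successively_trans_of_Seq_right:
  assumes disjoint: "set (pat_types P) \<inter> set (pat_types Q) = {}"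
    and walk: "successively (\<lambda>a b. (ety a, ety b) \<in> trans_of (Seq P Q)) ys"
    and start: "ety (hd ys) \<in> set (pat_types Q)"
  shows "successively (\<lambda>a b. (ety a, ety b) \<in> trans_of Q) ys"
proof -
  have not_P: "x \<notin> set (pat_types P)" if "x \<in> set (pat_types Q)" for x
    using that disjoint by blast
  have "set ys \<subseteq> {a. ety a \<in> set (pat_types Q)}"
    using walk
  proof (rule successively_closed_set)
    fix a b assume "(ety a, ety b) \<in> trans_of (Seq P Q)" "a \<in> {a. ety a \<in> set (pat_types Q)}"
    then show "b \<in> {a. ety a \<in> set (pat_types Q)}"
      using not_P pend_in_pat_types[of P] pstart_in_pat_types[of Q]
        trans_of_source_in_pat_types[of _ _ P] trans_of_target_in_pat_types[of _ _ Q]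
      by auto
  qed (use start in simp)
  show ?thesis
    using walk
  proof (rule successively_mono)
    fix a b assume "a \<in> set ys" "(ety a, ety b) \<in> trans_of (Seq P Q)"
    moreover have "ety a \<notin> set (pat_types P)" using \<open>a \<in> set ys\<close> \<open>set ys \<subseteq> _\<close> not_P by blast
    ultimately show "(ety a, ety b) \<in> trans_of Q"
      using pend_in_pat_types[of P] trans_of_source_in_pat_types[of _ _ P] by auto
  qed
qed

text \<open>By disjointness of the type sets, a template trend of \<open>Seq P Q\<close> leaves the types of \<open>P\<close>
  exactly once, through the edge \<open>end P \<rightarrow> start Q\<close>.\<close>
lemma template_trends_Seq_split:
  assumes disjoint: "set (pat_types P) \<inter> set (pat_types Q) = {}"
    and s: "s \<in> template_trends ety tm I (Seq P Q)"
  obtains xs ys where "s = xs @ ys" "xs \<in> template_trends ety tm I P" "ys \<in> template_trends ety tm I Q"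
proof -
  let ?R = "\<lambda>a b. (ety a, ety b) \<in> trans_of P"
  let ?Q = "\<lambda>a b. (ety a, ety b) \<in> insert (pend P, pstart Q) (trans_of Q)"
  have not_Q: "x \<notin> set (pat_types Q)" if "x \<in> set (pat_types P)" for x
    using that disjoint by blast
  have s_props: "s \<noteq> []" "ety (hd s) = pstart P" "ety (last s) = pend Q"
    "successively (\<lambda>a b. (ety a, ety b) \<in> trans_of (Seq P Q)) s"
    "set s \<subseteq> set I" "sorted_wrt (\<lambda>a b. tm a < tm b) s"
    using s by (auto simp: template_trends_def)
  have "successively (\<lambda>a b. ?R a b \<or> ?Q a b) s"
    using s_props(4) by (rule successively_mono) auto
  moreover have "\<not> successively ?R s"
  proof
    assume "successively ?R s"
    then have "\<forall>a\<in>set s. ety a \<in> set (pat_types P)"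
      using s_props(2) pstart_in_pat_types by (intro successively_trans_of_in_pat_types) simp_all
    then have "ety (last s) \<in> set (pat_types P)" using s_props(1) by simp
    then show False using s_props(3) not_Q pend_in_pat_types[of Q] by simp
  qed
  ultimately obtain xs ys where split: "s = xs @ ys" "xs \<noteq> []" "ys \<noteq> []" "successively ?R xs"
    "?Q (last xs) (hd ys)" "successively (\<lambda>a b. ?R a b \<or> ?Q a b) ys"
    by (rule successively_disj_split)
  have "\<forall>a\<in>set xs. ety a \<in> set (pat_types P)"
    using split(1,2) s_props(2) pstart_in_pat_types by (intro successively_trans_of_in_pat_types[OF split(4)]) simp
  then have "ety (last xs) \<in> set (pat_types P)" using split(2) by simp
  then have "ety (last xs) \<notin> set (pat_types Q)" by (rule not_Q)
  then have "(ety (last xs), ety (hd ys)) \<notin> trans_of Q" by (auto dest: trans_of_source_in_pat_types)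
  then have bridge: "ety (last xs) = pend P" "ety (hd ys) = pstart Q"
    using split(5) by simp_all
  have "successively (\<lambda>a b. (ety a, ety b) \<in> trans_of (Seq P Q)) ys"
    using split(6) by (rule successively_mono) auto
  then have "successively (\<lambda>a b. (ety a, ety b) \<in> trans_of Q) ys"
    using disjoint bridge(2) pstart_in_pat_types by (intro successively_trans_of_Seq_right) simp_all
  moreover have "sorted_wrt (\<lambda>a b. tm a < tm b) xs" "sorted_wrt (\<lambda>a b. tm a < tm b) ys"
    using s_props(6) split(1) by (simp_all add: sorted_wrt_append)
  ultimately have "xs \<in> template_trends ety tm I P" "ys \<in> template_trends ety tm I Q"
    using split(1-4) s_props(1-3,5) bridge by (auto simp: template_trends_def)
  with split(1) show ?thesis by (rule that)
qed

lemma template_trends_Seq: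
  assumes "set (pat_types P) \<inter> set (pat_types Q) = {}"
  shows "template_trends ety tm I (Seq P Q) = {xs @ ys | xs ys. xs \<in> template_trends ety tm I P
     \<and> ys \<in> template_trends ety tm I Q \<and> sorted_wrt (\<lambda>a b. tm a < tm b) (xs @ ys)}"
proof (intro set_eqI iffI)
  fix s assume s: "s \<in> template_trends ety tm I (Seq P Q)"
  with assms obtain xs ys where "s = xs @ ys" "xs \<in> template_trends ety tm I P" "ys \<in> template_trends ety tm I Q"
    by (rule template_trends_Seq_split)
  moreover have "sorted_wrt (\<lambda>a b. tm a < tm b) s" using s by (simp add: template_trends_def)
  ultimately show "s \<in> {xs @ ys | xs ys. xs \<in> template_trends ety tm I P
     \<and> ys \<in> template_trends ety tm I Q \<and> sorted_wrt (\<lambda>a b. tm a < tm b) (xs @ ys)}"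
    by blast
next
  fix s assume "s \<in> {xs @ ys | xs ys. xs \<in> template_trends ety tm I P
     \<and> ys \<in> template_trends ety tm I Q \<and> sorted_wrt (\<lambda>a b. tm a < tm b) (xs @ ys)}"
  then obtain xs ys where split: "s = xs @ ys" "xs \<in> template_trends ety tm I P"
    "ys \<in> template_trends ety tm I Q" "sorted_wrt (\<lambda>a b. tm a < tm b) (xs @ ys)"
    by blast
  let ?S = "\<lambda>a b. (ety a, ety b) \<in> trans_of (Seq P Q)"
  have xs: "xs \<noteq> []" "ety (last xs) = pend P" "successively (\<lambda>a b. (ety a, ety b) \<in> trans_of P) xs"
    using split(2) by (simp_all add: template_trends_def)
  have ys: "ys \<noteq> []" "ety (hd ys) = pstart Q" "successively (\<lambda>a b. (ety a, ety b) \<in> trans_of Q) ys"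
    using split(3) by (simp_all add: template_trends_def)
  have "successively ?S xs" using xs(3) by (rule successively_mono) simp
  moreover have "successively ?S ys" using ys(3) by (rule successively_mono) simp
  ultimately have "successively ?S (xs @ ys)"
    using xs(1,2) ys(1,2) by (simp add: successively_append_iff)
  with split show "s \<in> template_trends ety tm I (Seq P Q)"
    by (auto simp: template_trends_def)
qed

lemma matches_eq_template_trends: "wf_pat P \<Longrightarrow> matches ety tm I P = template_trends ety tm I P"
  by (induction P) (auto simp: wf_pat_def template_trends_Atom template_trends_Plus template_trends_Seq)

lemma subtrends_conv_successively:
  "subtrends ety tm P I e = {s. s \<noteq> [] \<and> set s \<subseteq> set I \<and> last s = e \<and> ety (hd s) = pstart P
      \<and> sorted_wrt (\<lambda>a b. tm a < tm b) s \<and> successively (\<lambda>a b. (ety a, ety b) \<in> trans_of P) s}"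
  unfolding subtrends_def successively_conv_nth predTypes_def by auto

lemma finite_subtrends: "finite (subtrends ety tm P I e)"
proof (rule finite_subset)
  show "subtrends ety tm P I e \<subseteq> {s. set s \<subseteq> set I \<and> distinct s}"
    by (auto simp: subtrends_conv_successively intro: sorted_wrt_less_imp_distinct)
qed (simp add: finite_subset_distinct)

lemma subtrends_last_in_stream: "s \<in> subtrends ety tm P I e \<Longrightarrow> e \<in> set I"
  unfolding subtrends_conv_successively using last_in_set by fastforce

definition pred_events :: "('e \<Rightarrow> 't) \<Rightarrow> ('e \<Rightarrow> rat) \<Rightarrow> 't pat \<Rightarrow> 'e list \<Rightarrow> 'e \<Rightarrow> 'e set" where
  "pred_events ety tm P I e = {p \<in> set I. ety p \<in> predTypes P (ety e) \<and> tm p < tm e}"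

lemma snoc_in_subtrends:
  assumes "p \<in> pred_events ety tm P I e" "s \<in> subtrends ety tm P I p" "e \<in> set I"
  shows "s @ [e] \<in> subtrends ety tm P I e"
proof -
  have s: "s \<noteq> []" "set s \<subseteq> set I" "last s = p" "ety (hd s) = pstart P"
    "sorted_wrt (\<lambda>a b. tm a < tm b) s" "successively (\<lambda>a b. (ety a, ety b) \<in> trans_of P) s"
    using assms(2) by (simp_all add: subtrends_conv_successively)
  have p: "tm p < tm e" "(ety p, ety e) \<in> trans_of P"
    using assms(1) by (simp_all add: pred_events_def predTypes_def)
  have "sorted_wrt (\<lambda>a b. tm a < tm b) (s @ [e])"
    using s(5,3) p(1) by (intro sorted_wrt_less_append) simp_all
  moreover have "successively (\<lambda>a b. (ety a, ety b) \<in> trans_of P) (s @ [e])"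
    using s(1,3,6) p(2) by (simp add: successively_append_iff)
  ultimately show ?thesis
    using s(1,2,4) assms(3) by (simp add: subtrends_conv_successively)
qed

lemma subtrends_unfold:
  assumes "e \<in> set I"
  shows "subtrends ety tm P I e = (if ety e = pstart P then {[e]} else {})
     \<union> (\<Union>p\<in>pred_events ety tm P I e. (\<lambda>s. s @ [e]) ` subtrends ety tm P I p)"
proof (intro set_eqI iffI)
  fix s assume "s \<in> subtrends ety tm P I e"
  then have s: "s \<noteq> []" "set s \<subseteq> set I" "last s = e" "ety (hd s) = pstart P"
    "sorted_wrt (\<lambda>a b. tm a < tm b) s" "successively (\<lambda>a b. (ety a, ety b) \<in> trans_of P) s"
    by (simp_all add: subtrends_conv_successively)
  define s' where "s' = butlast s"
  have s': "s = s' @ [e]" using append_butlast_last_id[OF s(1)] s(3) by (simp add: s'_def)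
  show "s \<in> (if ety e = pstart P then {[e]} else {})
     \<union> (\<Union>p\<in>pred_events ety tm P I e. (\<lambda>s. s @ [e]) ` subtrends ety tm P I p)"
  proof (cases "s' = []")
    case True
    then show ?thesis using s s' by simp
  next
    case False
    have "sorted_wrt (\<lambda>a b. tm a < tm b) s'" "tm (last s') < tm e"
      using s(5) s' False by (auto simp: sorted_wrt_append)
    moreover have "successively (\<lambda>a b. (ety a, ety b) \<in> trans_of P) s'"
      "(ety (last s'), ety e) \<in> trans_of P"
      using s(6) s' False by (auto simp: successively_append_iff)
    moreover have "set s' \<subseteq> set I" "hd s' = hd s" using s(2) s' False by auto
    ultimately have "last s' \<in> pred_events ety tm P I e" "s' \<in> subtrends ety tm P I (last s')"
      using s(4) False by (auto simp: pred_events_def predTypes_def subtrends_conv_successively)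
    then show ?thesis using s' by blast
  qed
next
  fix s assume "s \<in> (if ety e = pstart P then {[e]} else {})
     \<union> (\<Union>p\<in>pred_events ety tm P I e. (\<lambda>s. s @ [e]) ` subtrends ety tm P I p)"
  moreover have "[e] \<in> subtrends ety tm P I e" if "ety e = pstart P"
    using that assms by (simp add: subtrends_conv_successively)
  ultimately show "s \<in> subtrends ety tm P I e"
    using snoc_in_subtrends[OF _ _ assms] by (auto split: if_splits)
qed

lemma card_subtrends:
  assumes "e \<in> set I"
  shows "card (subtrends ety tm P I e) = (if ety e = pstart P then 1 else 0)
     + (\<Sum>p\<in>pred_events ety tm P I e. card (subtrends ety tm P I p))"
proof -
  let ?ext = "\<lambda>p. (\<lambda>s. s @ [e]) ` subtrends ety tm P I p"
  have fin: "finite (pred_events ety tm P I e)" by (simp add: pred_events_def)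
  have "card (\<Union>p\<in>pred_events ety tm P I e. ?ext p) = (\<Sum>p\<in>pred_events ety tm P I e. card (?ext p))"
  proof (rule card_UN_disjoint[OF fin])
    show "\<forall>p\<in>pred_events ety tm P I e. finite (?ext p)" by (simp add: finite_subtrends)
    show "\<forall>p\<in>pred_events ety tm P I e. \<forall>q\<in>pred_events ety tm P I e. p \<noteq> q \<longrightarrow> ?ext p \<inter> ?ext q = {}"
      by (auto simp: subtrends_conv_successively)
  qed
  also have "\<dots> = (\<Sum>p\<in>pred_events ety tm P I e. card (subtrends ety tm P I p))"
    by (simp add: card_image inj_on_def)
  moreover have "[e] \<notin> (\<Union>p\<in>pred_events ety tm P I e. ?ext p)"
    by (auto simp: subtrends_conv_successively)
  ultimately show ?thesis
    using fin by (simp add: subtrends_unfold[OF assms] finite_subtrends)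
qed

definition alg_invariant :: "('e \<Rightarrow> 't) \<Rightarrow> ('e \<Rightarrow> rat) \<Rightarrow> 't pat \<Rightarrow> 'e list \<Rightarrow> 'e list
    \<Rightarrow> 'e set \<times> ('e \<Rightarrow> nat) \<times> nat \<Rightarrow> bool" where
  "alg_invariant ety tm P I pre st \<longleftrightarrow>
     fst st = {e \<in> set pre. subtrends ety tm P I e \<noteq> {}}
     \<and> (\<forall>e\<in>fst st. fst (snd st) e = card (subtrends ety tm P I e))
     \<and> snd (snd st) = (\<Sum>e | e \<in> set pre \<and> ety e = pend P. card (subtrends ety tm P I e))"

lemma alg_step_invariant:
  assumes inv: "alg_invariant ety tm P I pre st"
    and x: "x \<in> set I" "x \<notin> set pre" and preds: "pred_events ety tm P I x \<subseteq> set pre"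
  shows "alg_invariant ety tm P I (pre @ [x]) (alg_step ety tm P st x)"
proof -
  let ?ST = "subtrends ety tm P I"
  obtain V cnt fc where st: "st = (V, cnt, fc)" by (cases st) auto
  define Pr where "Pr = {p \<in> V. ety p \<in> predTypes P (ety x) \<and> tm p < tm x}"
  define c where "c = (if ety x = pstart P then 1 else 0) + (\<Sum>p\<in>Pr. cnt p)"
  have V: "V = {e \<in> set pre. ?ST e \<noteq> {}}" and cnt: "\<forall>e\<in>V. cnt e = card (?ST e)"
    and fc: "fc = (\<Sum>e | e \<in> set pre \<and> ety e = pend P. card (?ST e))"
    using inv by (simp_all add: alg_invariant_def st)
  have Pr_eq: "Pr = {p \<in> pred_events ety tm P I x. ?ST p \<noteq> {}}"
    using preds unfolding Pr_def V pred_events_def by (auto dest: subtrends_last_in_stream)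
  have "(\<Sum>p\<in>Pr. cnt p) = (\<Sum>p\<in>Pr. card (?ST p))"
    using cnt by (simp add: Pr_def)
  also have "\<dots> = (\<Sum>p\<in>pred_events ety tm P I x. card (?ST p))"
    by (rule sum.mono_neutral_left) (auto simp: Pr_eq pred_events_def)
  finally have c_eq: "c = card (?ST x)"
    by (simp add: c_def card_subtrends[OF x(1)])
  have enabled_iff: "ety x = pstart P \<or> Pr \<noteq> {} \<longleftrightarrow> ?ST x \<noteq> {}"
    by (auto simp: Pr_eq subtrends_unfold[OF x(1)])
  have step: "alg_step ety tm P st x = (if ety x = pstart P \<or> Pr \<noteq> {}
      then (insert x V, cnt(x := c), if ety x = pend P then fc + c else fc) else (V, cnt, fc))"
    unfolding st alg_step_def Pr_def c_def by (simp only: prod.case Let_def)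
  have ends: "{e. e \<in> set (pre @ [x]) \<and> ety e = pend P}
      = (if ety x = pend P then insert x else id) {e. e \<in> set pre \<and> ety e = pend P}"
    by auto
  have fc_step: "(\<Sum>e | e \<in> set (pre @ [x]) \<and> ety e = pend P. card (?ST e))
      = fc + (if ety x = pend P then card (?ST x) else 0)"
    unfolding ends fc using x(2) by simp
  show ?thesis
  proof (cases "?ST x = {}")
    case True
    then show ?thesis
      using enabled_iff V cnt fc_step by (auto simp: step alg_invariant_def)
  next
    case False
    moreover have "x \<notin> V" using x(2) V by blast
    ultimately show ?thesis
      using enabled_iff V cnt fc_step c_eq by (auto simp: step alg_invariant_def)
  qed
qed

lemma foldl_alg_step_invariant:
  assumes stream: "event_stream tm I" and "pre @ rest = I"
  shows "alg_invariant ety tm P I pre (foldl (alg_step ety tm P) ({}, \<lambda>_. 0, 0) pre)"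
  using assms(2)
proof (induction pre arbitrary: rest rule: rev_induct)
  case Nil
  then show ?case by (simp add: alg_invariant_def)
next
  case (snoc x pre)
  have "distinct I" "sorted (map tm I)" using stream by (simp_all add: event_stream_def)
  then have "x \<notin> set pre" "\<forall>y\<in>set rest. tm x \<le> tm y"
    using snoc.prems by (auto simp: sorted_append)
  moreover have "pred_events ety tm P I x \<subseteq> set pre"
    using snoc.prems calculation(2) by (force simp: pred_events_def)
  ultimately show ?case
    using alg_step_invariant snoc.IH[of "x # rest"] snoc.prems by fastforce
qed

lemma template_trends_eq_UN_subtrends:
  "template_trends ety tm I P = (\<Union>e\<in>{e \<in> set I. ety e = pend P}. subtrends ety tm P I e)"
proof (intro set_eqI iffI)
  fix s assume s: "s \<in> template_trends ety tm I P"
  then have "last s \<in> {e \<in> set I. ety e = pend P}"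
    unfolding template_trends_def using last_in_set by fastforce
  moreover have "s \<in> subtrends ety tm P I (last s)"
    using s by (simp add: template_trends_def subtrends_conv_successively)
  ultimately show "s \<in> (\<Union>e\<in>{e \<in> set I. ety e = pend P}. subtrends ety tm P I e)" by blast
qed (auto simp: template_trends_def subtrends_conv_successively)

lemma card_template_trends:
  "card (template_trends ety tm I P) = (\<Sum>e | e \<in> set I \<and> ety e = pend P. card (subtrends ety tm P I e))"
  unfolding template_trends_eq_UN_subtrends
proof (rule card_UN_disjoint)
  show "\<forall>e\<in>{e \<in> set I. ety e = pend P}. finite (subtrends ety tm P I e)"
    by (simp add: finite_subtrends)
  show "\<forall>e\<in>{e \<in> set I. ety e = pend P}. \<forall>e'\<in>{e \<in> set I. ety e = pend P}.
      e \<noteq> e' \<longrightarrow> subtrends ety tm P I e \<inter> subtrends ety tm P I e' = {}"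
    by (auto simp: subtrends_conv_successively)
qed simp

theorem theorem4:
  fixes ety :: "'e \<Rightarrow> 't" and tm :: "'e \<Rightarrow> rat" and P :: "'t pat" and I :: "'e list"
  assumes "wf_pat P" and "event_stream tm I"
  shows "(\<forall>e \<in> fst (run_alg ety tm P I).
            fst (snd (run_alg ety tm P I)) e = card (subtrends ety tm P I e))
       \<and> snd (snd (run_alg ety tm P I)) = card (matches ety tm I P)"
proof -
  have "alg_invariant ety tm P I I (run_alg ety tm P I)"
    unfolding run_alg_def using foldl_alg_step_invariant[OF assms(2), of I "[]"] by simp
  then show ?thesis
    by (simp add: alg_invariant_def matches_eq_template_trends[OF assms(1)] card_template_trends)
qed

end
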